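(* Let $i'$ be an index and $\mathcal B$ a set of $k-m\ge1$ indices not containing $i'$, with $\sigma_h>0$ for all $h\in\{i'\}\cup\mathcal B$ and $\mu_{i'}\ne\mu_j$ for all $j\in\mathcal B$. Then there is exactly one vector $(r_h)_{h\in\{i'\}\cup\mathcal B}$ with all $r_h>0$ and $\sum_h r_h=1$ satisfying $$\frac{(\mu_{i'}-\mu_j)^2}{\sigma_{i'}^2/r_{i'}+\sigma_j^2/r_j}=\frac{(\mu_{i'}-\mu_\ell)^2}{\sigma_{i'}^2/r_{i'}+\sigma_\ell^2/r_\ell}\ \ \forall j,\ell\in\mathcal B,\qquad r_{i'}=\sigma_{i'}\sqrt{\sum_{j\in\mathcal B}r_j^2/\sigma_j^2}.$$
   Context: The $\mu_h\in\mathbb R$ are (true) means and $\sigma_h^2$ (known) variances of normal sampling distributions; $r_h$ are sampling ratios. *)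

theory Defs
  imports "HOL-Analysis.Analysis"
begin

end

theory Submission imports Defs begin

text \<open>Write \<open>d\<^sub>j = (\<mu>\<^sub>i' - \<mu>\<^sub>j)\<^sup>2\<close>, \<open>w\<^sub>j = (\<sigma>\<^sub>j/\<sigma>\<^sub>i')\<^sup>2\<close> and \<open>t = r\<^sub>i'\<close>.
  If all ratios share a common value \<open>c\<close>, then with \<open>y = c \<sigma>\<^sub>i'\<^sup>2 / t\<close> each ratio condition
  says exactly \<open>y < d\<^sub>j\<close> and \<open>r\<^sub>j = t w\<^sub>j y/(d\<^sub>j - y)\<close>. The square-root condition then becomes
  \<open>F y = 1\<close> with \<open>F y = \<Sum>\<^sub>j w\<^sub>j (y/(d\<^sub>j - y))\<^sup>2\<close>, and the normalisation fixes \<open>t\<close>. Since \<open>F\<close>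
  increases strictly from \<open>F 0 = 0\<close> to \<open>\<infinity>\<close> on \<open>[0, min\<^sub>j d\<^sub>j)\<close>, the equation \<open>F y = 1\<close> has
  exactly one admissible root, and the allocation is unique.\<close>

lemma weighted_ratio_sq_sum_strict_mono:
  fixes d w :: "'a \<Rightarrow> real"
  assumes "finite B" "B \<noteq> {}" "\<And>j. j \<in> B \<Longrightarrow> w j > 0"
    and "0 \<le> x" "x < y" "\<And>j. j \<in> B \<Longrightarrow> y < d j"
  shows "(\<Sum>j\<in>B. w j * (x / (d j - x))\<^sup>2) < (\<Sum>j\<in>B. w j * (y / (d j - y))\<^sup>2)"
proof (rule sum_strict_mono[OF assms(1,2)])
  fix j assume j: "j \<in> B"
  have pos: "d j - x > 0" "d j - y > 0" using assms(4,5) assms(6)[OF j] by auto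
  have "x / (d j - x) < y / (d j - y)"
    using pos assms(4,5) by (simp add: divide_simps) (smt (verit) mult_strict_right_mono mult_left_mono)
  moreover have "0 \<le> x / (d j - x)" using pos assms(4) by simp
  ultimately have "(x / (d j - x))\<^sup>2 < (y / (d j - y))\<^sup>2" by (rule power_strict_mono) auto
  then show "w j * (x / (d j - x))\<^sup>2 < w j * (y / (d j - y))\<^sup>2"
    using assms(3)[OF j] by simp
qed

lemma weighted_ratio_sq_sum_eq_1_exists:
  fixes d w :: "'a \<Rightarrow> real"
  assumes "finite B" "B \<noteq> {}" "\<And>j. j \<in> B \<Longrightarrow> w j > 0" "\<And>j. j \<in> B \<Longrightarrow> d j > 0"
  shows "\<exists>y>0. (\<forall>j\<in>B. y < d j) \<and> (\<Sum>j\<in>B. w j * (y / (d j - y))\<^sup>2) = 1"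
proof -
  define F where "F y = (\<Sum>j\<in>B. w j * (y / (d j - y))\<^sup>2)" for y
  obtain m where m: "m \<in> B" "\<And>j. j \<in> B \<Longrightarrow> d m \<le> d j"
    using arg_min_if_finite(1)[OF assms(1,2), of d] arg_min_least[OF assms(1,2), of _ d] by blast
  define v where "v = w m"
  have v: "v > 0" and dm: "d m > 0" using assms(3,4) m(1) v_def by auto
  \<comment> \<open>chosen so that \<open>b/(d\<^sub>m - b) = (v+1)/v\<close>, whence \<open>w\<^sub>m (b/(d\<^sub>m - b))\<^sup>2 = (v+1)\<^sup>2/v > 1\<close>\<close>
  define b where "b = d m * (v + 1) / (2 * v + 1)"
  have b: "0 < b" "b < d m" using v dm by (simp_all add: b_def pos_divide_less_eq)
  have "d m - b = d m * v / (2 * v + 1)" using v by (simp add: b_def field_simps)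
  then have "b / (d m - b) = (v + 1) / v" using v dm by (simp add: b_def)
  then have "w m * (b / (d m - b))\<^sup>2 = (v + 1)\<^sup>2 / v" using v by (simp add: v_def power2_eq_square)
  also have "\<dots> > 1"
  proof -
    have "v < (v + 1)\<^sup>2" using v by (simp add: power2_eq_square algebra_simps add_pos_nonneg)
    then show ?thesis using v by (simp add: less_divide_eq)
  qed
  finally have "1 < w m * (b / (d m - b))\<^sup>2" .
  also have "\<dots> \<le> F b" unfolding F_def
    by (rule member_le_sum[OF m(1)]) (auto simp: assms(1) intro!: mult_nonneg_nonneg less_imp_le[OF assms(3)])
  finally have "1 < F b" .
  have below: "\<And>j. j \<in> B \<Longrightarrow> b < d j" using b(2) m(2) by fastforce
  have "continuous_on {0..b} F" unfolding F_def
    using below by (intro continuous_intros) (auto simp: not_le[symmetric])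
  then obtain y where y: "0 \<le> y" "y \<le> b" "F y = 1"
    using IVT'[of F 0 1 b] \<open>1 < F b\<close> b(1) by (auto simp: F_def)
  have "y \<noteq> 0" using y(3) by (auto simp: F_def)
  with y(1) have "y > 0" by simp
  moreover have "\<forall>j\<in>B. y < d j" using y(2) below by (auto intro: le_less_trans)
  ultimately show ?thesis using y(3) unfolding F_def by blast
qed

lemma weighted_ratio_sq_sum_eq_1_ex1:
  fixes d w :: "'a \<Rightarrow> real"
  assumes "finite B" "B \<noteq> {}" "\<And>j. j \<in> B \<Longrightarrow> w j > 0" "\<And>j. j \<in> B \<Longrightarrow> d j > 0"
  shows "\<exists>!y. y > 0 \<and> (\<forall>j\<in>B. y < d j) \<and> (\<Sum>j\<in>B. w j * (y / (d j - y))\<^sup>2) = 1"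
proof (rule ex_ex1I)
  show "\<exists>y. y > 0 \<and> (\<forall>j\<in>B. y < d j) \<and> (\<Sum>j\<in>B. w j * (y / (d j - y))\<^sup>2) = 1"
    using weighted_ratio_sq_sum_eq_1_exists[of B w d] assms by blast
next
  fix y1 y2
  assume y1: "y1 > 0 \<and> (\<forall>j\<in>B. y1 < d j) \<and> (\<Sum>j\<in>B. w j * (y1 / (d j - y1))\<^sup>2) = 1"
    and y2: "y2 > 0 \<and> (\<forall>j\<in>B. y2 < d j) \<and> (\<Sum>j\<in>B. w j * (y2 / (d j - y2))\<^sup>2) = 1"
  show "y1 = y2"
  proof (cases y1 y2 rule: linorder_cases)
    case less
    then show ?thesis
      using weighted_ratio_sq_sum_strict_mono[where B = B and w = w and d = d and x = y1 and y = y2] assms y1 y2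
      by auto
  next
    case greater
    then show ?thesis
      using weighted_ratio_sq_sum_strict_mono[where B = B and w = w and d = d and x = y2 and y = y1] assms y1 y2
      by auto
  qed
qed

lemma gap_ratio_eq_iff:
  fixes s \<sigma> t r d y :: real
  assumes "s > 0" "\<sigma> > 0" "t > 0" "r > 0" "y > 0"
  shows "d / (s\<^sup>2 / t + \<sigma>\<^sup>2 / r) = t * y / s\<^sup>2 \<longleftrightarrow> y < d \<and> r = t * (\<sigma> / s)\<^sup>2 * (y / (d - y))"
proof -
  have D: "s\<^sup>2 / t + \<sigma>\<^sup>2 / r > 0" using assms by (intro add_pos_pos divide_pos_pos) auto
  have "d / (s\<^sup>2 / t + \<sigma>\<^sup>2 / r) = t * y / s\<^sup>2 \<longleftrightarrow> d = t * y / s\<^sup>2 * (s\<^sup>2 / t + \<sigma>\<^sup>2 / r)"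
    using D by (simp add: divide_eq_eq)
  also have "t * y / s\<^sup>2 * (s\<^sup>2 / t + \<sigma>\<^sup>2 / r) = y + t * y * \<sigma>\<^sup>2 / (s\<^sup>2 * r)"
    using assms by (simp add: field_simps)
  finally have "d / (s\<^sup>2 / t + \<sigma>\<^sup>2 / r) = t * y / s\<^sup>2 \<longleftrightarrow> d - y = t * y * \<sigma>\<^sup>2 / (s\<^sup>2 * r)"
    by linarith
  also have "\<dots> \<longleftrightarrow> y < d \<and> r = t * (\<sigma> / s)\<^sup>2 * (y / (d - y))"
  proof
    assume gap: "d - y = t * y * \<sigma>\<^sup>2 / (s\<^sup>2 * r)"
    moreover have "t * y * \<sigma>\<^sup>2 / (s\<^sup>2 * r) > 0" using assms by simp
    ultimately have "y < d" by linarith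
    with gap show "y < d \<and> r = t * (\<sigma> / s)\<^sup>2 * (y / (d - y))"
      using assms by (simp add: field_simps power2_eq_square)
  next
    assume "y < d \<and> r = t * (\<sigma> / s)\<^sup>2 * (y / (d - y))"
    then show "d - y = t * y * \<sigma>\<^sup>2 / (s\<^sup>2 * r)"
      using assms by (simp add: field_simps power2_eq_square)
  qed
  finally show ?thesis .
qed

lemma sqrt_sum_sq_eq_iff:
  fixes \<sigma> r g :: "'a \<Rightarrow> real"
  assumes "s > 0" "t > 0" "\<And>j. j \<in> B \<Longrightarrow> \<sigma> j \<noteq> 0"
    and "\<And>j. j \<in> B \<Longrightarrow> r j = t * (\<sigma> j / s)\<^sup>2 * g j"
  shows "t = s * sqrt (\<Sum>j\<in>B. (r j)\<^sup>2 / (\<sigma> j)\<^sup>2) \<longleftrightarrow> (\<Sum>j\<in>B. (\<sigma> j / s)\<^sup>2 * (g j)\<^sup>2) = 1"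
proof -
  have "(\<Sum>j\<in>B. (r j)\<^sup>2 / (\<sigma> j)\<^sup>2) = (t / s)\<^sup>2 * (\<Sum>j\<in>B. (\<sigma> j / s)\<^sup>2 * (g j)\<^sup>2)"
    unfolding sum_distrib_left
    by (rule sum.cong) (use assms in \<open>simp_all add: field_simps power2_eq_square\<close>)
  then have "s * sqrt (\<Sum>j\<in>B. (r j)\<^sup>2 / (\<sigma> j)\<^sup>2) = t * sqrt (\<Sum>j\<in>B. (\<sigma> j / s)\<^sup>2 * (g j)\<^sup>2)"
    using assms(1,2) by (simp add: real_sqrt_mult)
  then show ?thesis using assms(2) by auto
qed

definition optimality_conditions ::
    "('a \<Rightarrow> real) \<Rightarrow> ('a \<Rightarrow> real) \<Rightarrow> 'a \<Rightarrow> 'a set \<Rightarrow> ('a \<Rightarrow> real) \<Rightarrow> bool" where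
  "optimality_conditions \<mu> \<sigma> i' B r \<longleftrightarrow>
     r \<in> extensional (insert i' B)
     \<and> (\<forall>h\<in>insert i' B. r h > 0)
     \<and> (\<Sum>h\<in>insert i' B. r h) = 1
     \<and> (\<forall>j\<in>B. \<forall>l\<in>B.
           (\<mu> i' - \<mu> j)\<^sup>2 / ((\<sigma> i')\<^sup>2 / r i' + (\<sigma> j)\<^sup>2 / r j)
         = (\<mu> i' - \<mu> l)\<^sup>2 / ((\<sigma> i')\<^sup>2 / r i' + (\<sigma> l)\<^sup>2 / r l))
     \<and> r i' = \<sigma> i' * sqrt (\<Sum>j\<in>B. (r j)\<^sup>2 / (\<sigma> j)\<^sup>2)"

definition balanced_allocation ::
    "'a \<Rightarrow> 'a set \<Rightarrow> ('a \<Rightarrow> real) \<Rightarrow> ('a \<Rightarrow> real) \<Rightarrow> real \<Rightarrow> 'a \<Rightarrow> real" where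
  "balanced_allocation i B w d y =
     restrict (\<lambda>h. (if h = i then 1 else w h * (y / (d h - y))) / (1 + (\<Sum>j\<in>B. w j * (y / (d j - y)))))
       (insert i B)"

lemma balanced_allocation_eq:
  fixes w d :: "'a \<Rightarrow> real" and y :: real
  assumes "i \<notin> B"
  defines "t \<equiv> 1 / (1 + (\<Sum>j\<in>B. w j * (y / (d j - y))))"
  shows "balanced_allocation i B w d y i = t"
    and "j \<in> B \<Longrightarrow> balanced_allocation i B w d y j = t * w j * (y / (d j - y))"
  using assms by (auto simp: balanced_allocation_def t_def)

lemma optimality_conditions_balanced_allocation:
  fixes mu sigma :: "'a \<Rightarrow> real" and i :: 'a and y :: real
  defines "w \<equiv> \<lambda>j. (sigma j / sigma i)\<^sup>2" and "d \<equiv> \<lambda>j. (mu i - mu j)\<^sup>2"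
  assumes B: "finite B" "i \<notin> B" and sigma: "\<And>h. h \<in> insert i B \<Longrightarrow> sigma h > 0"
    and y: "y > 0" "\<And>j. j \<in> B \<Longrightarrow> y < d j" "(\<Sum>j\<in>B. w j * (y / (d j - y))\<^sup>2) = 1"
  shows "optimality_conditions mu sigma i B (balanced_allocation i B w d y)"
proof -
  define r where "r = balanced_allocation i B w d y"
  define S where "S = (\<Sum>j\<in>B. w j * (y / (d j - y)))"
  define t where "t = 1 / (1 + S)"
  have s: "sigma i > 0" and sigma_pos: "\<And>j. j \<in> B \<Longrightarrow> sigma j > 0" using sigma by auto
  have wg: "w j * (y / (d j - y)) > 0" if "j \<in> B" for j
    using sigma_pos[OF that] s y(1) y(2)[OF that] by (simp add: w_def)
  have "S \<ge> 0" unfolding S_def using wg by (simp add: sum_nonneg less_imp_le)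
  then have t: "t > 0" "t + t * S = 1" by (simp_all add: t_def field_simps)
  have ri: "r i = t" and rj: "\<And>j. j \<in> B \<Longrightarrow> r j = t * w j * (y / (d j - y))"
    using balanced_allocation_eq[OF B(2)] unfolding r_def t_def S_def by auto
  have rj_pos: "r j > 0" if "j \<in> B" for j
    unfolding rj[OF that] mult.assoc using t(1) wg[OF that] by (rule mult_pos_pos)
  have ratio: "d j / ((sigma i)\<^sup>2 / r i + (sigma j)\<^sup>2 / r j) = t * y / (sigma i)\<^sup>2" if "j \<in> B" for j
    using gap_ratio_eq_iff[OF s sigma_pos[OF that] t(1) rj_pos[OF that] y(1)] rj[OF that] ri y(2)[OF that]
    by (simp add: w_def)
  have "optimality_conditions mu sigma i B r"
    unfolding optimality_conditions_def
  proof (intro conjI ballI)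
    show "r \<in> extensional (insert i B)"
      unfolding r_def balanced_allocation_def by (rule restrict_extensional)
    show "r h > 0" if "h \<in> insert i B" for h using that ri t(1) rj_pos by auto
    show "(\<Sum>h\<in>insert i B. r h) = 1"
      using B ri rj t(2) by (simp add: S_def sum_distrib_left mult.assoc)
    show "(mu i - mu j)\<^sup>2 / ((sigma i)\<^sup>2 / r i + (sigma j)\<^sup>2 / r j)
        = (mu i - mu l)\<^sup>2 / ((sigma i)\<^sup>2 / r i + (sigma l)\<^sup>2 / r l)" if "j \<in> B" "l \<in> B" for j l
      using ratio[OF that(1)] ratio[OF that(2)] by (simp add: d_def)
    show "r i = sigma i * sqrt (\<Sum>j\<in>B. (r j)\<^sup>2 / (sigma j)\<^sup>2)"
      using sqrt_sum_sq_eq_iff[OF s t(1), of B sigma r "\<lambda>j. y / (d j - y)"] sigma_pos rj ri y(3)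
      by (force simp: w_def)
  qed
  then show ?thesis unfolding r_def .
qed

lemma optimality_conditions_imp_balanced_allocation:
  fixes mu sigma r :: "'a \<Rightarrow> real" and i :: 'a
  defines "w \<equiv> \<lambda>j. (sigma j / sigma i)\<^sup>2" and "d \<equiv> \<lambda>j. (mu i - mu j)\<^sup>2"
  assumes B: "finite B" "B \<noteq> {}" "i \<notin> B" and sigma: "\<And>h. h \<in> insert i B \<Longrightarrow> sigma h > 0"
    and mu: "\<And>j. j \<in> B \<Longrightarrow> mu i \<noteq> mu j"
    and r: "optimality_conditions mu sigma i B r"
  shows "\<exists>y>0. (\<forall>j\<in>B. y < d j) \<and> (\<Sum>j\<in>B. w j * (y / (d j - y))\<^sup>2) = 1
           \<and> r = balanced_allocation i B w d y"
proof -
  define t where "t = r i"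
  have s: "sigma i > 0" and sigma_pos: "\<And>j. j \<in> B \<Longrightarrow> sigma j > 0" using sigma by auto
  from r have r_ext: "r \<in> extensional (insert i B)"
    and r_pos: "\<forall>h\<in>insert i B. r h > 0"
    and r_sum: "(\<Sum>h\<in>insert i B. r h) = 1"
    and r_ratio: "\<forall>j\<in>B. \<forall>l\<in>B.
           (mu i - mu j)\<^sup>2 / ((sigma i)\<^sup>2 / r i + (sigma j)\<^sup>2 / r j)
         = (mu i - mu l)\<^sup>2 / ((sigma i)\<^sup>2 / r i + (sigma l)\<^sup>2 / r l)"
    and r_sqrt: "r i = sigma i * sqrt (\<Sum>j\<in>B. (r j)\<^sup>2 / (sigma j)\<^sup>2)"
    unfolding optimality_conditions_def by blast+
  have t: "t > 0" and rj_pos: "\<And>j. j \<in> B \<Longrightarrow> r j > 0" using r_pos by (auto simp: t_def)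
  obtain j0 where j0: "j0 \<in> B" using B(2) by blast
  define c where "c = d j0 / ((sigma i)\<^sup>2 / t + (sigma j0)\<^sup>2 / r j0)"
  define y where "y = c * (sigma i)\<^sup>2 / t"
  have "d j0 > 0" using mu[OF j0] by (simp add: d_def)
  then have "c > 0" using s t sigma_pos[OF j0] rj_pos[OF j0] unfolding c_def
    by (intro divide_pos_pos add_pos_pos) auto
  then have y_pos: "y > 0" using s t by (simp add: y_def)
  have "d j / ((sigma i)\<^sup>2 / t + (sigma j)\<^sup>2 / r j) = t * y / (sigma i)\<^sup>2" if "j \<in> B" for j
    using r_ratio[rule_format, OF that j0] s t unfolding c_def y_def d_def t_def by simp
  then have y_below: "\<And>j. j \<in> B \<Longrightarrow> y < d j"
    and rj: "\<And>j. j \<in> B \<Longrightarrow> r j = t * w j * (y / (d j - y))"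
    using gap_ratio_eq_iff[OF s sigma_pos t rj_pos y_pos] by (auto simp: w_def)
  from r_sqrt have root: "(\<Sum>j\<in>B. w j * (y / (d j - y))\<^sup>2) = 1"
    using sqrt_sum_sq_eq_iff[OF s t, of B sigma r "\<lambda>j. y / (d j - y)"] sigma_pos rj
    by (force simp: w_def t_def)
  have "t * (1 + (\<Sum>j\<in>B. w j * (y / (d j - y)))) = 1"
    using r_sum B rj by (simp add: t_def distrib_left sum_distrib_left mult.assoc)
  then have t_eq: "t = 1 / (1 + (\<Sum>j\<in>B. w j * (y / (d j - y))))"
    by (auto simp: eq_divide_eq)
  have "r = balanced_allocation i B w d y"
  proof (rule extensionalityI)
    show "r \<in> extensional (insert i B)" by (rule r_ext)
    show "balanced_allocation i B w d y \<in> extensional (insert i B)"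
      unfolding balanced_allocation_def by (rule restrict_extensional)
    show "r h = balanced_allocation i B w d y h" if "h \<in> insert i B" for h
      using that rj balanced_allocation_eq[OF B(3), where w = w and d = d and y = y, folded t_eq]
      by (auto simp: t_def)
  qed
  then show ?thesis using y_pos y_below root by blast
qed

theorem proposition3:
  fixes mu sigma :: "'a \<Rightarrow> real" and i' :: 'a and B :: "'a set"
  assumes "finite B" and "B \<noteq> {}" and "i' \<notin> B"
    and "\<And>h. h \<in> insert i' B \<Longrightarrow> sigma h > 0"
    and "\<And>j. j \<in> B \<Longrightarrow> mu i' \<noteq> mu j"
  shows "\<exists>!r. r \<in> extensional (insert i' B)
           \<and> (\<forall>h\<in>insert i' B. r h > 0)
           \<and> (\<Sum>h\<in>insert i' B. r h) = 1
           \<and> (\<forall>j\<in>B. \<forall>l\<in>B.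
                 (mu i' - mu j)\<^sup>2 / ((sigma i')\<^sup>2 / r i' + (sigma j)\<^sup>2 / r j)
               = (mu i' - mu l)\<^sup>2 / ((sigma i')\<^sup>2 / r i' + (sigma l)\<^sup>2 / r l))
           \<and> r i' = sigma i' * sqrt (\<Sum>j\<in>B. (r j)\<^sup>2 / (sigma j)\<^sup>2)"
proof -
  define w where "w = (\<lambda>j. (sigma j / sigma i')\<^sup>2)"
  define d where "d = (\<lambda>j. (mu i' - mu j)\<^sup>2)"
  have "w j > 0" if "j \<in> B" for j using assms(4)[of i'] assms(4)[of j] that by (simp add: w_def)
  moreover have "d j > 0" if "j \<in> B" for j using assms(5)[OF that] by (simp add: d_def)
  ultimately obtain y where y: "y > 0" "\<forall>j\<in>B. y < d j" "(\<Sum>j\<in>B. w j * (y / (d j - y))\<^sup>2) = 1"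
    and unique: "\<And>y'. y' > 0 \<and> (\<forall>j\<in>B. y' < d j) \<and> (\<Sum>j\<in>B. w j * (y' / (d j - y'))\<^sup>2) = 1
                   \<Longrightarrow> y' = y"
    using weighted_ratio_sq_sum_eq_1_ex1[OF assms(1,2), of w d] by blast
  have "\<exists>!r. optimality_conditions mu sigma i' B r"
  proof (rule ex1I)
    show "optimality_conditions mu sigma i' B (balanced_allocation i' B w d y)"
      using optimality_conditions_balanced_allocation[where mu = mu and sigma = sigma and i = i'] assms y
      unfolding w_def d_def by blast
  next
    fix r assume "optimality_conditions mu sigma i' B r"
    then show "r = balanced_allocation i' B w d y"
      using optimality_conditions_imp_balanced_allocation[where mu = mu and sigma = sigma and i = i'] assms unique
      unfolding w_def d_def by blast
  qed
  then show ?thesis unfolding optimality_conditions_def .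
qed

end
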